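(* Let $\bar t,\bar x$ be sets of $a$ generic complex numbers and $\bar s,\bar y$ sets of $b$ generic complex numbers. Then $$Z_{a,b}(\bar t;\bar x|\bar s;\bar y)=(-1)^{a+b}f(\bar x,\bar t)f(\bar s,\bar t)\sum g(\bar\nu_{\rm I},\bar\nu_{\rm II})\,K_{a+b}(\{\bar\nu_{\rm I},\bar t-c\}|\{\bar x,\bar s\}),$$ where the sum runs over partitions $\{\bar s-c,\bar y\}=\bar\nu\Rightarrow\{\bar\nu_{\rm I},\bar\nu_{\rm II}\}$ with $\#\bar\nu_{\rm I}=\#\bar\nu_{\rm II}=b$.
   Context: Fix $c\neq0$; $g(u,v)=\frac{c}{u-v}$, $f(u,v)=\frac{u-v+c}{u-v}$, $h(u,v)=\frac{u-v+c}{c}$. Shorthand: $g,f,h$ evaluated on sets mean products over all pairs of elements; empty products are $1$; $\bar t-c=\{t_1-c,\dots\}$; $\{\cdot,\cdot\}$ denotes union. $\Delta'_n(\bar u)=\prod_{j<k}g(u_j,u_k)$, $\Delta_n(\bar v)=\prod_{j>k}g(v_j,v_k)$, $K_n(\bar u|\bar v)=\Delta'_n(\bar u)\Delta_n(\bar v)h(\bar u,\bar v)\det_n\big(g(u_j,v_k)/h(u_j,v_k)\big)$ (symmetric in the elements of each argument). The highest coefficient is $Z_{a,b}(\bar t;\bar x|\bar s;\bar y)=h(\bar w,\bar t)\Delta_{a+b}(\bar w)\Delta'_a(\bar t)\Delta'_b(\bar y)\det_{a+b}\mathcal J$ with $\bar w=(x_1,\dots,x_a,s_1,\dots,s_b)$,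 $\mathcal J_{jk}=g(w_j,t_k)/h(w_j,t_k)$ for $k=1,\dots,a$ and $\mathcal J_{j,a+k}=g(w_j,y_k)h(w_j,\bar x)/h(w_j,\bar t)$ for $k=1,\dots,b$. *)

theory Defs
  imports Complex_Main "Jordan_Normal_Form.Determinant"
begin

definition gfun :: "complex \<Rightarrow> complex \<Rightarrow> complex \<Rightarrow> complex" where
  "gfun c u v = c / (u - v)"
definition ffun :: "complex \<Rightarrow> complex \<Rightarrow> complex \<Rightarrow> complex" where
  "ffun c u v = (u - v + c) / (u - v)"
definition hfun :: "complex \<Rightarrow> complex \<Rightarrow> complex \<Rightarrow> complex" where
  "hfun c u v = (u - v + c) / c"

definition pairprod :: "(complex \<Rightarrow> complex \<Rightarrow> complex) \<Rightarrow> complex list \<Rightarrow> complex list \<Rightarrow> complex" where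
  "pairprod F us vs = (\<Prod>i<length us. \<Prod>j<length vs. F (us ! i) (vs ! j))"

definition DeltaP :: "complex \<Rightarrow> complex list \<Rightarrow> complex" where
  "DeltaP c us = (\<Prod>k<length us. \<Prod>j<k. gfun c (us ! j) (us ! k))"
definition Delta :: "complex \<Rightarrow> complex list \<Rightarrow> complex" where
  "Delta c vs = (\<Prod>j<length vs. \<Prod>k<j. gfun c (vs ! j) (vs ! k))"

text \<open>Izergin-Korepin determinant
  K_n(u|v) = Delta'_n(u) Delta_n(v) h(u,v) det_n (g(u_j,v_k)/h(u_j,v_k)),
  written with the factor prod_k h(u_j,v_k) multiplied into row j, so that the
  removable singularities at u_j = v_k - c are resolved (this is the same
  rational function; it agrees with the displayed formula whenever all h(u_j,v_k) are nonzero).\<close>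
definition IKdet :: "complex \<Rightarrow> complex list \<Rightarrow> complex list \<Rightarrow> complex" where
  "IKdet c us vs = DeltaP c us * Delta c vs *
     det (mat (length us) (length us) (\<lambda>(j, k). gfun c (us ! j) (vs ! k) *
        (\<Prod>l\<in>{..<length us} - {k}. hfun c (us ! j) (vs ! l))))"

definition Zhc :: "complex \<Rightarrow> complex list \<Rightarrow> complex list \<Rightarrow> complex list \<Rightarrow> complex list \<Rightarrow> complex" where
  "Zhc c t x s y =
     (let a = length t; b = length s; w = x @ s in
      pairprod (hfun c) w t * Delta c w * DeltaP c t * DeltaP c y *
      det (mat (a + b) (a + b) (\<lambda>(j, k).
        if k < a then gfun c (w ! j) (t ! k) / hfun c (w ! j) (t ! k)
        else gfun c (w ! j) (y ! (k - a)) * pairprod (hfun c) [w ! j] x / pairprod (hfun c) [w ! j] t)))"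

end

theory Submission
  imports Defs "HOL-Computational_Algebra.Polynomial"
begin

text \<open>Transpose the matrix of Z and move its b rows coming from y to the top. Multiplying these
  rows by a weighted Vandermonde matrix in y, Lagrange interpolation at y and w_j collapses
  them to rows E_i(w_j) = w_j^i h(w_j,x) / (h(w_j,t) prod_v (w_j - v)), v in y.
  On the other side, Cauchy-Binet over the b-subsets of nu = {s - c, y} merges the sum of
  Izergin-Korepin determinants into a single determinant whose top rows are combinations of the
  rows g(nu_r, w) h(nu_r, w); Lagrange interpolation at w_j, nu and t - c turns them into -c^b
  times the same rows E plus combinations of the rows coming from t, which row operations
  remove. Both sides are therefore multiples of the determinant theta with rows E and the t-rows.\<close>

lemma prod_lessThan_add:
  fixes f :: "nat \<Rightarrow> 'a::comm_monoid_mult"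
  shows "(\<Prod>i<m + n. f i) = (\<Prod>i<m. f i) * (\<Prod>i<n. f (m + i))"
  by (induction n) (simp_all add: mult.assoc)

lemma prod_nth_distinct:
  assumes "distinct vs"
  shows "(\<Prod>j<length vs. f (vs ! j)) = (\<Prod>v\<in>set vs. f v)"
proof -
  have "bij_betw ((!) vs) {..<length vs} (set vs)"
    using bij_betw_nth[OF assms, of "{..<length vs}" "set vs"] by (simp add: lessThan_def)
  thus ?thesis by (simp add: prod.reindex_bij_betw[symmetric])
qed

lemma sum_nth_distinct:
  assumes "distinct vs"
  shows "(\<Sum>j<length vs. f (vs ! j)) = (\<Sum>v\<in>set vs. f v)"
proof -
  have "bij_betw ((!) vs) {..<length vs} (set vs)"
    using bij_betw_nth[OF assms, of "{..<length vs}" "set vs"] by (simp add: lessThan_def)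
  thus ?thesis by (simp add: sum.reindex_bij_betw[symmetric])
qed

lemma prod_nth_distinct_remove:
  assumes "distinct vs" "m < length vs"
  shows "(\<Prod>j\<in>{..<length vs} - {m}. f (vs ! j)) = (\<Prod>v\<in>set vs - {vs ! m}. f v)"
proof -
  have inj: "inj_on ((!) vs) {..<length vs}" by (rule inj_on_nth) (use assms in auto)
  have img: "(!) vs ` ({..<length vs} - {m}) = set vs - {vs ! m}"
    using inj assms by (auto simp: inj_on_def in_set_conv_nth)
  have "inj_on ((!) vs) ({..<length vs} - {m})" using inj by (rule inj_on_subset) auto
  thus ?thesis using prod.reindex[of "(!) vs" "{..<length vs} - {m}" f] img by simp
qed

lemma prod_off_diagonal:
  fixes f :: "nat \<Rightarrow> nat \<Rightarrow> 'a::comm_monoid_mult"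
  shows "(\<Prod>m<n. \<Prod>j\<in>{..<n} - {m}. f m j) = (\<Prod>m<n. \<Prod>j<m. f m j * f j m)"
proof (induction n)
  case 0 show ?case by simp
next
  case (Suc n)
  have "(\<Prod>m<Suc n. \<Prod>j\<in>{..<Suc n} - {m}. f m j) =
     (\<Prod>m<n. f m n * (\<Prod>j\<in>{..<n} - {m}. f m j)) * (\<Prod>j<n. f n j)"
  proof -
    have "m < n \<Longrightarrow> {..<Suc n} - {m} = insert n ({..<n} - {m})" for m by auto
    moreover have "{..<Suc n} - {n} = {..<n}" by auto
    ultimately show ?thesis by simp
  qed
  also have "\<dots> = (\<Prod>m<n. \<Prod>j<m. f m j * f j m) * (\<Prod>j<n. f n j * f j n)"
    by (simp add: prod.distrib Suc.IH ac_simps)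
  finally show ?case by simp
qed

lemma bij_betw_sorted_list_of_set_nth:
  assumes "finite I" "card I = n"
  shows "bij_betw ((!) (sorted_list_of_set I)) {..<n} I"
proof -
  have "bij_betw ((!) (sorted_list_of_set I)) {..<length (sorted_list_of_set I)} (set (sorted_list_of_set I))"
    by (rule bij_betw_nth) auto
  thus ?thesis using assms by (simp add: lessThan_def)
qed

lemma nths_nth_sorted_list_of_set:
  assumes "I \<subseteq> {..<length xs}" "m < card I"
  shows "nths xs I ! m = xs ! (sorted_list_of_set I ! m)"
proof -
  have "nths [0..<length xs] I = sorted_list_of_set I"
  proof (rule sorted_distinct_set_unique)
    show "set (nths [0..<length xs] I) = set (sorted_list_of_set I)"
      using assms finite_subset[OF assms(1)] by (auto simp: set_nths)
        (metis lessThan_iff nth_upt plus_nat.add_0 subsetD)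
  qed (auto intro: sorted_nths)
  moreover have "xs = map ((!) xs) [0..<length xs]" by (simp add: map_nth)
  ultimately have "nths xs I = map ((!) xs) (sorted_list_of_set I)" by (metis nths_map)
  thus ?thesis using assms finite_subset[OF assms(1)] by simp
qed

lemma det_mat_scale_rows_cols:
  fixes e :: "nat \<Rightarrow> nat \<Rightarrow> 'a::comm_ring_1"
  shows "det (mat n n (\<lambda>(i, j). r i * e i j * s j)) =
    prod r {..<n} * prod s {..<n} * det (mat n n (\<lambda>(i, j). e i j))"
proof -
  have "det (mat n n (\<lambda>(i, j). r i * e i j * s j)) =
     (\<Sum>p\<in>{p. p permutes {0..<n}}. signof p * (\<Prod>i=0..<n. r i * e i (p i) * s (p i)))"
    by (subst det_def'[of _ n]) (auto intro!: sum.cong prod.cong)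
  also have "\<dots> = (\<Sum>p\<in>{p. p permutes {0..<n}}.
      prod r {..<n} * prod s {..<n} * (signof p * (\<Prod>i=0..<n. e i (p i))))"
  proof (rule sum.cong[OF refl])
    fix p assume "p \<in> {p. p permutes {0..<n}}"
    hence "(\<Prod>i=0..<n. s (p i)) = (\<Prod>i=0..<n. s i)"
      using prod.permute[of p "{0..<n}" s] by (simp add: o_def)
    thus "signof p * (\<Prod>i=0..<n. r i * e i (p i) * s (p i)) =
      prod r {..<n} * prod s {..<n} * (signof p * (\<Prod>i=0..<n. e i (p i)))"
      by (simp add: prod.distrib atLeast0LessThan ac_simps)
  qed
  also have "\<dots> = prod r {..<n} * prod s {..<n} * det (mat n n (\<lambda>(i, j). e i j))"
    by (subst det_def'[of _ n]) (auto simp: sum_distrib_left intro!: sum.cong prod.cong)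
  finally show ?thesis .
qed

lemma det_mat_first_col_unit:
  fixes f :: "nat \<times> nat \<Rightarrow> 'a::idom"
  assumes "\<And>i. i < Suc n \<Longrightarrow> f (i, 0) = (if i = 0 then 1 else 0)"
  shows "det (mat (Suc n) (Suc n) f) = det (mat n n (\<lambda>(i, j). f (Suc i, Suc j)))"
proof -
  let ?A1 = "mat 1 1 (\<lambda>_. 1::'a)"
  let ?A2 = "mat 1 n (\<lambda>(i, j). f (0, Suc j))"
  let ?A4 = "mat n n (\<lambda>(i, j). f (Suc i, Suc j))"
  have "mat (Suc n) (Suc n) f = four_block_mat ?A1 ?A2 (0\<^sub>m n 1) ?A4"
    by (rule eq_matI) (auto simp: assms less_Suc_eq_0_disj)
  moreover have "det (four_block_mat ?A1 ?A2 (0\<^sub>m n 1) ?A4) = det ?A1 * det ?A4"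
    by (rule det_four_block_mat_lower_left_zero_col) auto
  ultimately show ?thesis by (simp add: det_single)
qed

lemma det_vandermonde:
  fixes z :: "nat \<Rightarrow> 'a::idom"
  shows "det (mat n n (\<lambda>(k, m). z m ^ k)) = (\<Prod>m<n. \<Prod>j<m. z m - z j)"
proof (induction n arbitrary: z)
  case 0
  then show ?case by simp
next
  case (Suc n)
  let ?V = "mat (Suc n) (Suc n) (\<lambda>(k, m). z m ^ k)"
  let ?L = "mat (Suc n) (Suc n) (\<lambda>(i, j). if i = j then 1 else if i = Suc j then - z 0 else (0::'a))"
  let ?LV = "mat (Suc n) (Suc n) (\<lambda>(k, m). if k = 0 then 1 else z m ^ (k - 1) * (z m - z 0))"
  \<comment> \<open>subtract z 0 times each row from the next one\<close>
  have detL: "det ?L = 1"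
    by (subst det_lower_triangular[of "Suc n"]) (auto simp: prod_list_diag_prod)
  have LV: "?L * ?V = ?LV"
  proof (rule eq_matI)
    fix k m assume "k < dim_row ?LV" "m < dim_col ?LV"
    hence k: "k < Suc n" and m: "m < Suc n" by auto
    have "(?L * ?V) $$ (k, m) = (\<Sum>l<Suc n. ?L $$ (k, l) * z m ^ l)"
      using k m by (simp add: scalar_prod_def atLeast0LessThan)
    also have "\<dots> = (\<Sum>l\<in>{l. l < Suc n \<and> (l = k \<or> Suc l = k)}. ?L $$ (k, l) * z m ^ l)"
      by (rule sum.mono_neutral_right) (use k in auto)
    also have "\<dots> = ?LV $$ (k, m)"
    proof (cases k)
      case 0
      hence "{l. l < Suc n \<and> (l = k \<or> Suc l = k)} = {0}" by auto
      then show ?thesis using 0 k m by simp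
    next
      case (Suc k')
      hence "{l. l < Suc n \<and> (l = k \<or> Suc l = k)} = {k, k'}" using k by auto
      then show ?thesis using Suc k m by (simp add: algebra_simps)
    qed
    finally show "(?L * ?V) $$ (k, m) = ?LV $$ (k, m)" .
  qed auto
  have "det ?V = det (?L * ?V)"
    using det_mult[of ?L "Suc n" ?V] detL by simp
  also have "\<dots> = det (mat n n (\<lambda>(i, j). 1 * z (Suc j) ^ i * (z (Suc j) - z 0)))"
    unfolding LV by (subst det_mat_first_col_unit) auto
  also have "\<dots> = (\<Prod>j<n. z (Suc j) - z 0) * (\<Prod>m<n. \<Prod>j<m. z (Suc m) - z (Suc j))"
    using Suc.IH[of "\<lambda>j. z (Suc j)"] by (subst det_mat_scale_rows_cols) simp
  also have "\<dots> = (\<Prod>m<Suc n. \<Prod>j<m. z m - z j)"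
    by (simp only: prod.lessThan_Suc_shift[of "\<lambda>m. \<Prod>j<m. z m - z j"]
        prod.lessThan_Suc_shift[of "\<lambda>j. z (Suc _) - z j"] prod.distrib) simp
  finally show ?case .
qed

lemma det_expand_top_rows:
  fixes F :: "nat \<Rightarrow> nat \<Rightarrow> 'a::comm_ring_1"
  assumes "b \<le> n"
  shows "det (mat n n (\<lambda>(i, j). if i < b then (\<Sum>\<rho><N. \<alpha> i \<rho> * F \<rho> j) else P (i - b) j)) =
    (\<Sum>f | (\<forall>i<b. f i < N) \<and> (\<forall>i\<ge>b. f i = i).
       (\<Prod>i<b. \<alpha> i (f i)) * det (mat n n (\<lambda>(i, j). if i < b then F (f i) j else P (i - b) j)))"
proof -
  let ?T = "{0..<b}"
  let ?a = "\<lambda>i \<rho>. \<alpha> i \<rho> \<cdot>\<^sub>v vec n (F \<rho>)"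
  let ?c = "\<lambda>i. vec n (P (i - b))"
  have Fs: "{f. (\<forall>i<b. f i < N) \<and> (\<forall>i\<ge>b. f i = i)} =
      {f. (\<forall>i\<in>?T. f i \<in> {..<N}) \<and> (\<forall>i. i \<notin> ?T \<longrightarrow> f i = i)}" by auto
  have "mat n n (\<lambda>(i, j). if i < b then (\<Sum>\<rho><N. \<alpha> i \<rho> * F \<rho> j) else P (i - b) j) =
     mat\<^sub>r n n (\<lambda>i. if i \<in> ?T then finsum_vec TYPE('a) n (?a i) {..<N} else ?c i)"
    by (rule eq_matI) (auto simp: index_finsum_vec[OF finite_lessThan] intro!: sum.cong)
  moreover have "det (mat\<^sub>r n n (\<lambda>i. if i \<in> ?T then finsum_vec TYPE('a) n (?a i) {..<N} else ?c i)) =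
     (\<Sum>f\<in>{f. (\<forall>i\<in>?T. f i \<in> {..<N}) \<and> (\<forall>i. i \<notin> ?T \<longrightarrow> f i = i)}.
       det (mat\<^sub>r n n (\<lambda>i. if i \<in> ?T then ?a i (f i) else ?c i)))"
    by (rule det_linear_rows_finsum_lemma) (use assms in auto)
  moreover have "det (mat\<^sub>r n n (\<lambda>i. if i \<in> ?T then ?a i (f i) else ?c i)) =
       (\<Prod>i<b. \<alpha> i (f i)) * det (mat n n (\<lambda>(i, j). if i < b then F (f i) j else P (i - b) j))" for f
  proof -
    let ?v = "\<lambda>i. if i < b then vec n (F (f i)) else ?c i"
    have "mat\<^sub>r n n (\<lambda>i. if i \<in> ?T then ?a i (f i) else ?c i) =
        mat\<^sub>r n n (\<lambda>i. (if i < b then \<alpha> i (f i) else 1) \<cdot>\<^sub>v ?v i)"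
      by (rule eq_matI) auto
    moreover have "(\<Prod>i=0..<n. if i < b then \<alpha> i (f i) else 1) = (\<Prod>i<b. \<alpha> i (f i))"
      using prod.mono_neutral_right[of "{0..<n}" "{0..<b}" "\<lambda>i. if i < b then \<alpha> i (f i) else 1"] assms
      by (auto simp: atLeast0LessThan)
    moreover have "mat\<^sub>r n n ?v = mat n n (\<lambda>(i, j). if i < b then F (f i) j else P (i - b) j)"
      by (rule eq_matI) auto
    ultimately show ?thesis by (simp add: det_rows_mul)
  qed
  ultimately show ?thesis unfolding Fs by simp
qed

lemma bij_betw_subsets_permutations_injections:
  "bij_betw (\<lambda>(I, \<pi>) i. if i < b then sorted_list_of_set I ! \<pi> i else i)
     (SIGMA I:{I. I \<subseteq> {..<N} \<and> card I = b}. {\<pi>. \<pi> permutes {..<b}})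
     {f. ((\<forall>i<b. f i < N) \<and> (\<forall>i\<ge>b. f i = i)) \<and> inj_on f {..<b}}"
    (is "bij_betw ?h ?D ?Inj")
proof (rule bij_betw_imageI)
  have bij: "bij_betw ((!) (sorted_list_of_set I)) {..<b} I" if "I \<subseteq> {..<N}" "card I = b" for I
    using that finite_subset by (blast intro: bij_betw_sorted_list_of_set_nth)
  have perm_lt: "\<pi> i < b" if "\<pi> permutes {..<b}" "i < b" for \<pi> i
    using that permutes_in_image by fastforce
  show "inj_on ?h ?D"
  proof (rule inj_onI)
    fix p q assume "p \<in> ?D" "q \<in> ?D" and eq: "?h p = ?h q"
    then obtain I \<pi> I' \<pi>' where pq: "p = (I, \<pi>)" "q = (I', \<pi>')"
      and I: "I \<subseteq> {..<N}" "card I = b" and perm: "\<pi> permutes {..<b}"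
      and I': "I' \<subseteq> {..<N}" "card I' = b" and perm': "\<pi>' permutes {..<b}" by auto
    have image: "?h (J, \<sigma>) ` {..<b} = J" if "J \<subseteq> {..<N}" "card J = b" "\<sigma> permutes {..<b}" for J \<sigma>
    proof -
      have "?h (J, \<sigma>) ` {..<b} = (!) (sorted_list_of_set J) ` \<sigma> ` {..<b}" by (auto simp: image_iff)
      also have "\<dots> = J"
        using permutes_image[OF that(3)] bij[OF that(1,2)] by (simp add: bij_betw_def)
      finally show ?thesis .
    qed
    have "I = I'" using image[OF I perm] image[OF I' perm'] eq unfolding pq by metis
    moreover have "\<pi> i = \<pi>' i" for i
    proof (cases "i < b")
      case True
      hence "sorted_list_of_set I ! \<pi> i = sorted_list_of_set I ! \<pi>' i"
        using fun_cong[OF eq, of i] \<open>I = I'\<close> pq by simp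
      thus ?thesis
        using bij[OF I] perm_lt[OF perm True] perm_lt[OF perm' True] by (auto simp: bij_betw_def inj_on_def)
    next
      case False
      thus ?thesis using perm perm' unfolding permutes_def by auto
    qed
    ultimately show "p = q" using pq by auto
  qed
  show "?h ` ?D = ?Inj"
  proof
    show "?h ` ?D \<subseteq> ?Inj"
    proof
      fix f assume "f \<in> ?h ` ?D"
      then obtain I \<pi> where f: "f = ?h (I, \<pi>)"
        and I: "I \<subseteq> {..<N}" "card I = b" and perm: "\<pi> permutes {..<b}" by auto
      note bj = bij[OF I]
      have "f i < N" if "i < b" for i
        using that bj perm_lt[OF perm] I by (auto simp: f bij_betw_def)
      moreover have "inj_on f {..<b}"
      proof (rule inj_onI)
        fix i j assume "i \<in> {..<b}" "j \<in> {..<b}" "f i = f j"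
        hence "\<pi> i = \<pi> j" using bj perm_lt[OF perm] by (auto simp: f bij_betw_def inj_on_def)
        thus "i = j" using perm by (metis permutes_def)
      qed
      ultimately show "f \<in> ?Inj" by (simp add: f)
    qed
    show "?Inj \<subseteq> ?h ` ?D"
    proof
      fix f assume f: "f \<in> ?Inj"
      define I where "I = f ` {..<b}"
      have inj: "inj_on f {..<b}" using f by simp
      have I: "I \<subseteq> {..<N}" "card I = b" using f inj by (auto simp: I_def card_image)
      note bj = bij[OF I]
      define \<pi> where "\<pi> = (\<lambda>i. if i < b then inv_into {..<b} ((!) (sorted_list_of_set I)) (f i) else i)"
      have "bij_betw (inv_into {..<b} ((!) (sorted_list_of_set I)) \<circ> f) {..<b} {..<b}"
        using inj by (intro bij_betw_trans[OF _ bij_betw_inv_into[OF bj]]) (simp add: I_def bij_betw_def)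
      hence "bij_betw \<pi> {..<b} {..<b}"
        by (rule bij_betw_cong[THEN iffD1, rotated]) (simp add: \<pi>_def)
      hence p: "\<pi> permutes {..<b}" by (rule bij_imp_permutes) (simp add: \<pi>_def)
      have "?h (I, \<pi>) = f"
      proof
        fix i show "?h (I, \<pi>) i = f i"
        proof (cases "i < b")
          case True
          hence "f i \<in> (!) (sorted_list_of_set I) ` {..<b}" using bj by (auto simp: bij_betw_def I_def)
          thus ?thesis using True by (simp add: \<pi>_def f_inv_into_f)
        qed (use f in \<open>simp add: \<pi>_def\<close>)
      qed
      moreover have "(I, \<pi>) \<in> ?D" using I p by auto
      ultimately show "f \<in> ?h ` ?D" by force
    qed
  qed
qed

lemma det_cauchy_binet_top_rows:
  fixes F :: "nat \<Rightarrow> nat \<Rightarrow> 'a::comm_ring_1"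
  assumes "b \<le> n"
  shows "det (mat n n (\<lambda>(i, j). if i < b then (\<Sum>\<rho><N. \<alpha> i \<rho> * F \<rho> j) else P (i - b) j)) =
    (\<Sum>I | I \<subseteq> {..<N} \<and> card I = b.
       det (mat b b (\<lambda>(k, m). \<alpha> k (sorted_list_of_set I ! m))) *
       det (mat n n (\<lambda>(i, j). if i < b then F (sorted_list_of_set I ! i) j else P (i - b) j)))"
proof -
  define M where "M f = det (mat n n (\<lambda>(i, j). if i < b then F (f i) j else P (i - b) j))" for f
  define g where "g f = (\<Prod>i<b. \<alpha> i (f i)) * M f" for f
  define Fs where "Fs = {f. (\<forall>i<b. f i < N) \<and> (\<forall>i\<ge>b. f i = (i::nat))}"
  define h where "h = (\<lambda>(I, \<pi>) i. if i < b then sorted_list_of_set I ! \<pi> i else (i::nat))"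
  let ?Sets = "{I. I \<subseteq> {..<N} \<and> card I = b}"
  have "finite Fs"
  proof -
    have "Fs = {f. (\<forall>i\<in>{0..<b}. f i \<in> {..<N}) \<and> (\<forall>i. i \<notin> {0..<b} \<longrightarrow> f i = i)}"
      by (auto simp: Fs_def)
    thus ?thesis by (simp only:) (rule finite_bounded_functions, auto)
  qed
  have "g f = 0" if f: "f \<in> Fs - {f \<in> Fs. inj_on f {..<b}}" for f
  proof -
    obtain i j where ij: "i < b" "j < b" "i \<noteq> j" "f i = f j"
      using f unfolding inj_on_def by blast
    have "M f = 0" unfolding M_def
      by (rule det_identical_rows[of _ n i j]) (use ij assms in \<open>auto intro!: eq_vecI\<close>)
    thus ?thesis by (simp add: g_def)
  qed
  hence "sum g Fs = sum g {f \<in> Fs. inj_on f {..<b}}"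
    using sum.subset_diff[of "{f \<in> Fs. inj_on f {..<b}}" Fs g] \<open>finite Fs\<close> by auto
  also have "\<dots> = (\<Sum>p\<in>(SIGMA I:?Sets. {\<pi>. \<pi> permutes {..<b}}). g (h p))"
    unfolding h_def
  proof (rule sum.reindex_bij_betw[symmetric])
    show "bij_betw (\<lambda>(I, \<pi>) i. if i < b then sorted_list_of_set I ! \<pi> i else i)
        (SIGMA I:?Sets. {\<pi>. \<pi> permutes {..<b}}) {f \<in> Fs. inj_on f {..<b}}"
      using bij_betw_subsets_permutations_injections[of b N] by (simp add: Fs_def conj_assoc)
  qed
  also have "\<dots> = (\<Sum>I\<in>?Sets. \<Sum>\<pi> | \<pi> permutes {..<b}. g (h (I, \<pi>)))"
    by (subst sum.Sigma) (auto simp: finite_subset intro: finite_permutations)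
  also have "\<dots> = (\<Sum>I\<in>?Sets. det (mat b b (\<lambda>(k, m). \<alpha> k (sorted_list_of_set I ! m))) *
      M ((!) (sorted_list_of_set I)))"
  proof (rule sum.cong[OF refl])
    fix I :: "nat set"
    let ?e = "(!) (sorted_list_of_set I)"
    have "g (h (I, \<pi>)) = M ?e * (signof \<pi> * (\<Prod>i=0..<b. \<alpha> i (?e (\<pi> i))))"
      if perm: "\<pi> permutes {..<b}" for \<pi>
    proof -
      have perm_n: "\<pi> permutes {0..<n}" by (rule permutes_subset[OF perm]) (use assms in auto)
      have "mat n n (\<lambda>(i, j). if i < b then F (h (I, \<pi>) i) j else P (i - b) j) =
        mat n n (\<lambda>(i, j). mat n n (\<lambda>(i, j). if i < b then F (?e i) j else P (i - b) j) $$ (\<pi> i, j))"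
      proof (rule eq_matI)
        fix i j assume "i < dim_row (mat n n (\<lambda>(i, j).
            mat n n (\<lambda>(i, j). if i < b then F (?e i) j else P (i - b) j) $$ (\<pi> i, j)))"
          "j < dim_col (mat n n (\<lambda>(i, j).
            mat n n (\<lambda>(i, j). if i < b then F (?e i) j else P (i - b) j) $$ (\<pi> i, j)))"
        moreover have "\<pi> i < n" if "i < n" using that perm_n permutes_in_image by fastforce
        moreover have "(\<pi> i < b) = (i < b)" "\<not> i < b \<Longrightarrow> \<pi> i = i"
          using perm permutes_in_image[OF perm, of i] unfolding permutes_def by auto
        ultimately show "mat n n (\<lambda>(i, j). if i < b then F (h (I, \<pi>) i) j else P (i - b) j) $$ (i, j) =
          mat n n (\<lambda>(i, j). mat n n (\<lambda>(i, j). if i < b then F (?e i) j else P (i - b) j) $$ (\<pi> i, j)) $$ (i, j)"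
          by (auto simp: h_def)
      qed auto
      hence "M (h (I, \<pi>)) = signof \<pi> * M ?e"
        unfolding M_def by (simp add: det_permute_rows[OF _ perm_n])
      moreover have "(\<Prod>i<b. \<alpha> i (h (I, \<pi>) i)) = (\<Prod>i=0..<b. \<alpha> i (?e (\<pi> i)))"
        by (auto simp: h_def atLeast0LessThan intro!: prod.cong)
      ultimately show ?thesis by (simp add: g_def ac_simps)
    qed
    hence "(\<Sum>\<pi> | \<pi> permutes {..<b}. g (h (I, \<pi>))) =
       M ?e * (\<Sum>\<pi> | \<pi> permutes {0..<b}. signof \<pi> * (\<Prod>i=0..<b. \<alpha> i (?e (\<pi> i))))"
      by (simp add: sum_distrib_left atLeast0LessThan)
    also have "(\<Sum>\<pi> | \<pi> permutes {0..<b}. signof \<pi> * (\<Prod>i=0..<b. \<alpha> i (?e (\<pi> i)))) =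
       det (mat b b (\<lambda>(k, m). \<alpha> k (?e m)))"
      by (subst det_def'[of _ b]) (auto intro!: sum.cong prod.cong)
    finally show "(\<Sum>\<pi> | \<pi> permutes {..<b}. g (h (I, \<pi>))) =
       det (mat b b (\<lambda>(k, m). \<alpha> k (?e m))) * M ?e" by simp
  qed
  finally show ?thesis
    using det_expand_top_rows[OF assms, of \<alpha> F N P] by (simp add: g_def M_def Fs_def)
qed

lemma det_add_lower_rows_to_top:
  fixes X Y :: "nat \<Rightarrow> nat \<Rightarrow> 'a::comm_ring_1"
  assumes n: "n = b + a"
  shows "det (mat n n (\<lambda>(i, j). if i < b then X i j + (\<Sum>k<a. \<gamma> i k * Y k j) else Y (i - b) j)) =
         det (mat n n (\<lambda>(i, j). if i < b then X i j else Y (i - b) j))"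
proof -
  let ?M = "mat n n (\<lambda>(i, j). if i < b then X i j else Y (i - b) j)"
  let ?U = "mat n n (\<lambda>(i, l). if i = l then 1 else if i < b \<and> b \<le> l then \<gamma> i (l - b) else (0::'a))"
  let ?R = "mat n n (\<lambda>(i, j). if i < b then X i j + (\<Sum>k<a. \<gamma> i k * Y k j) else Y (i - b) j)"
  have detU: "det ?U = 1"
    by (subst det_upper_triangular[of _ n]) (auto simp: upper_triangular_def prod_list_diag_prod)
  have "?U * ?M = ?R"
  proof (rule eq_matI)
    fix i j assume "i < dim_row ?R" "j < dim_col ?R"
    hence i: "i < n" and j: "j < n" by auto
    let ?f = "\<lambda>l. ?U $$ (i, l) * ?M $$ (l, j)"
    have "(?U * ?M) $$ (i, j) = (\<Sum>l<n. ?f l)"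
      using i j by (simp add: scalar_prod_def atLeast0LessThan)
    also have "\<dots> = ?R $$ (i, j)"
    proof (cases "i < b")
      case True
      have "(\<Sum>l<n. ?f l) = (\<Sum>l\<in>{i} \<union> {b..<n}. ?f l)"
        by (rule sum.mono_neutral_right) (use i True in auto)
      also have "\<dots> = ?f i + (\<Sum>l\<in>{b..<n}. ?f l)"
        by (subst sum.union_disjoint) (use True in auto)
      also have "(\<Sum>l\<in>{b..<n}. ?f l) = (\<Sum>l\<in>{b..<n}. \<gamma> i (l - b) * Y (l - b) j)"
        by (rule sum.cong) (use True n j in auto)
      also have "\<dots> = (\<Sum>k<a. \<gamma> i k * Y k j)"
        using sum.atLeastLessThan_shift_0[of "\<lambda>l. \<gamma> i (l - b) * Y (l - b) j" b n] n
        by (simp add: o_def atLeast0LessThan)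
      finally show ?thesis using True i j by simp
    next
      case False
      have "(\<Sum>l<n. ?f l) = ?f i"
        using sum.mono_neutral_right[of "{..<n}" "{i}" ?f] i False by auto
      thus ?thesis using False i j by simp
    qed
    finally show "(?U * ?M) $$ (i, j) = ?R $$ (i, j)" .
  qed auto
  thus ?thesis using det_mult[of ?U n ?M] detU by simp
qed

section \<open>Vanishing Lagrange sums\<close>

lemma sum_poly_div_prod_diffs_eq_0:
  fixes S :: "'a::field set" and Q :: "'a poly"
  assumes fin: "finite S" and deg: "degree Q + 2 \<le> card S"
  shows "(\<Sum>z\<in>S. poly Q z / (\<Prod>v\<in>S - {z}. z - v)) = 0"
proof -
  \<comment> \<open>the sum is the leading coefficient of the Lagrange interpolant of Q at S, which is Q itself\<close>
  let ?N = "card S"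
  define d where "d u = (\<Prod>v\<in>S - {u}. u - v)" for u
  define B where "B u = (\<Prod>v\<in>S - {u}. [:- v, 1:])" for u
  define P where "P = (\<Sum>u\<in>S. smult (poly Q u / d u) (B u))"
  have degB: "u \<in> S \<Longrightarrow> degree (B u) = ?N - 1" for u
    unfolding B_def using fin by (subst degree_prod_eq_sum_degree) (auto simp: card_Diff_singleton)
  have "lead_coeff (B u) = 1" for u
    unfolding B_def lead_coeff_prod by simp
  hence coeffP: "coeff P (?N - 1) = (\<Sum>u\<in>S. poly Q u / d u)"
    unfolding P_def coeff_sum coeff_smult using degB by (metis (no_types, lifting) mult_1_right sum.cong)
  have degP: "degree P \<le> ?N - 1"
    unfolding P_def by (rule degree_sum_le[OF fin]) (auto intro: order.trans[OF degree_smult_le] simp: degB)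
  have polyB: "u \<in> S \<Longrightarrow> k \<in> S \<Longrightarrow> poly (B u) k = (if u = k then d u else 0)" for u k
    unfolding B_def d_def poly_prod using fin by (auto intro!: prod.cong simp: prod_zero_iff)
  have dnz: "d u \<noteq> 0" if "u \<in> S" for u
    unfolding d_def using fin by (auto simp: prod_zero_iff)
  have polyP: "poly P k = poly Q k" if k: "k \<in> S" for k
  proof -
    have "poly P k = (\<Sum>u\<in>S. poly Q u / d u * poly (B u) k)"
      unfolding P_def poly_sum by simp
    also have "\<dots> = (\<Sum>u\<in>{k}. poly Q u / d u * poly (B u) k)"
      by (rule sum.mono_neutral_right) (use k polyB fin in auto)
    also have "\<dots> = poly Q k" using polyB[OF k k] dnz[OF k] by simp
    finally show ?thesis .
  qed
  have "P = Q"
  proof (rule ccontr)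
    assume "P \<noteq> Q"
    hence ne0: "P - Q \<noteq> 0" by simp
    have "S \<subseteq> {x. poly (P - Q) x = 0}" using polyP by auto
    hence "card S \<le> card {x. poly (P - Q) x = 0}"
      by (rule card_mono[OF poly_roots_finite[OF ne0]])
    also have "\<dots> \<le> degree (P - Q)" by (rule card_poly_roots_bound[OF ne0])
    also have "\<dots> \<le> ?N - 1"
      using degree_diff_le[of P "?N - 1" Q] degP deg by auto
    finally show False using deg by simp
  qed
  hence "coeff P (?N - 1) = 0" using deg by (simp add: coeff_eq_0)
  thus ?thesis using coeffP d_def by simp
qed

lemma sum_poly_div_prod_diffs_insert:
  fixes S :: "'a::field set" and Q :: "'a poly"
  assumes fin: "finite S" and w: "w \<notin> S" and deg: "degree Q + 1 \<le> card S"
  shows "poly Q w / (\<Prod>v\<in>S. w - v) + (\<Sum>z\<in>S. poly Q z / ((z - w) * (\<Prod>v\<in>S - {z}. z - v))) = 0"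
proof -
  have "insert w S - {z} = insert w (S - {z})" if "z \<in> S" for z using that w by auto
  hence "(\<Sum>z\<in>S. poly Q z / (\<Prod>v\<in>insert w S - {z}. z - v)) =
      (\<Sum>z\<in>S. poly Q z / ((z - w) * (\<Prod>v\<in>S - {z}. z - v)))"
    using fin w by (intro sum.cong) auto
  moreover have "(\<Sum>z\<in>insert w S. poly Q z / (\<Prod>v\<in>insert w S - {z}. z - v)) = 0"
    by (rule sum_poly_div_prod_diffs_eq_0) (use fin w deg in auto)
  ultimately show ?thesis using fin w by (simp add: insert_Diff_if)
qed

section \<open>Both sides as multiples of one determinant\<close>

lemma pairprod_append_left: "pairprod F (us @ us') vs = pairprod F us vs * pairprod F us' vs"
  unfolding pairprod_def by (simp add: prod_lessThan_add nth_append)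

lemma DeltaP_append: "DeltaP c (us @ vs) = DeltaP c us * DeltaP c vs * pairprod (gfun c) us vs"
proof -
  let ?g = "gfun c"
  have "DeltaP c (us @ vs) = DeltaP c us *
      (\<Prod>k<length vs. (\<Prod>j<length us. ?g (us ! j) (vs ! k)) * (\<Prod>j<k. ?g (vs ! j) (vs ! k)))"
    unfolding DeltaP_def length_append prod_lessThan_add by (simp add: nth_append)
  also have "\<dots> = DeltaP c us * DeltaP c vs * (\<Prod>k<length vs. \<Prod>j<length us. ?g (us ! j) (vs ! k))"
    unfolding DeltaP_def prod.distrib by (simp add: ac_simps)
  also have "(\<Prod>k<length vs. \<Prod>j<length us. ?g (us ! j) (vs ! k)) = pairprod ?g us vs"
    unfolding pairprod_def by (rule prod.swap)
  finally show ?thesis .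
qed

lemma DeltaP_map_shift: "DeltaP c (map (\<lambda>z. z - d) us) = DeltaP c us"
  unfolding DeltaP_def gfun_def by simp

lemma det_weighted_vandermonde:
  fixes z :: "complex list"
  assumes d: "distinct z" and l: "length z = n"
  shows "det (mat n n (\<lambda>(i, m). z ! m ^ i * (R m * (\<Prod>v\<in>set z - {z ! m}. c / (z ! m - v))))) =
    (\<Prod>m<n. R m) * DeltaP c z * c ^ (\<Sum>m<n. m)"
proof -
  have ne: "z ! m - z ! j \<noteq> 0" "z ! j - z ! m \<noteq> 0" if "j < m" "m < n" for j m
    using that d l by (auto simp: nth_eq_iff_index_eq)
  have "(\<Prod>m<n. \<Prod>v\<in>set z - {z ! m}. c / (z ! m - v)) = (\<Prod>m<n. \<Prod>j\<in>{..<n} - {m}. c / (z ! m - z ! j))"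
    using prod_nth_distinct_remove[OF d, of _ "\<lambda>v. c / (z ! _ - v)"] l by (intro prod.cong) auto
  also have "\<dots> = (\<Prod>m<n. \<Prod>j<m. c / (z ! m - z ! j) * (c / (z ! j - z ! m)))"
    by (rule prod_off_diagonal)
  also have "(\<Prod>m<n. \<Prod>j<m. c / (z ! m - z ! j) * (c / (z ! j - z ! m))) * (\<Prod>m<n. \<Prod>j<m. z ! m - z ! j) =
      (\<Prod>m<n. \<Prod>j<m. gfun c (z ! j) (z ! m) * c)"
    unfolding prod.distrib[symmetric]
  proof (intro prod.cong refl)
    fix m j assume "m \<in> {..<n}" "j \<in> {..<m}"
    hence "z ! m - z ! j \<noteq> 0" using ne by simp
    moreover have "z ! j - z ! m = - (z ! m - z ! j)" by simp
    ultimately show "c / (z ! m - z ! j) * (c / (z ! j - z ! m)) * (z ! m - z ! j) = gfun c (z ! j) (z ! m) * c"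
      unfolding gfun_def by (metis (no_types) divide_minus_right mult.commute nonzero_eq_divide_eq times_divide_eq_left)
  qed
  also have "\<dots> = DeltaP c z * c ^ (\<Sum>m<n. m)"
    unfolding DeltaP_def l prod.distrib by (simp add: power_sum)
  finally show ?thesis
    using det_mat_scale_rows_cols[where r="\<lambda>_. 1" and e="\<lambda>i m. z ! m ^ i"
        and s="\<lambda>m. R m * (\<Prod>v\<in>set z - {z ! m}. c / (z ! m - v))" and n=n]
      det_vandermonde[of n "(!) z"]
    by (simp add: prod.distrib ac_simps)
qed

locale highest_coeff_data =
  fixes c :: complex and t x s y :: "complex list" and a b :: nat
  assumes c: "c \<noteq> 0"
    and lens: "length t = a" "length x = a" "length s = b" "length y = b"
    and generic: "\<And>i j. i < length (t @ x @ s @ y) \<Longrightarrow> j < length (t @ x @ s @ y) \<Longrightarrow> i \<noteq> j \<Longrightarrow>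
        (t @ x @ s @ y) ! i - (t @ x @ s @ y) ! j \<notin> {0, c, - c}"
begin

abbreviation "pts \<equiv> t @ x @ s @ y"

lemma distinct_pts: "distinct pts"
  unfolding distinct_conv_nth using generic by fastforce

lemma distinct_parts:
  "distinct t" "distinct x" "distinct s" "distinct y"
  "set t \<inter> set x = {}" "set t \<inter> set s = {}" "set t \<inter> set y = {}"
  "set x \<inter> set s = {}" "set x \<inter> set y = {}" "set s \<inter> set y = {}"
  using distinct_pts by auto

lemma pts_ne_shift: "u \<in> set pts \<Longrightarrow> v \<in> set pts \<Longrightarrow> u \<noteq> v + c"
proof
  assume "u \<in> set pts" "v \<in> set pts" "u = v + c"
  moreover from this obtain i j where "i < length pts" "j < length pts" "pts ! i = u" "pts ! j = v"
    by (metis in_set_conv_nth)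
  ultimately show False using generic[of i j] c by (cases "i = j") auto
qed

definition "w = x @ s"

lemma length_w: "length w = a + b"
  using lens by (simp add: w_def)

lemma w_in_x_s: "j < a + b \<Longrightarrow> w ! j \<in> set x \<union> set s"
  using lens by (auto simp: w_def nth_append)

lemma w_in_pts: "j < a + b \<Longrightarrow> w ! j \<in> set pts"
  using w_in_x_s by auto

lemma w_notin_t: "j < a + b \<Longrightarrow> w ! j \<notin> set t"
  using w_in_x_s distinct_parts by blast

lemma w_notin_y: "j < a + b \<Longrightarrow> w ! j \<notin> set y"
  using w_in_x_s distinct_parts by blast

definition "rowA m j = gfun c (w ! j) (t ! m) / hfun c (w ! j) (t ! m)"
definition "hratio j = pairprod (hfun c) [w ! j] x / pairprod (hfun c) [w ! j] t"
definition "rowB k j = gfun c (w ! j) (y ! k) * hratio j"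
definition "rowE i j = (w ! j) ^ i * hratio j / (\<Prod>v\<in>set y. w ! j - v)"

lemma Zhc_eq_det_rows:
  "Zhc c t x s y = pairprod (hfun c) w t * Delta c w * DeltaP c t * DeltaP c y * (-1) ^ (b * a) *
     det (mat (b + a) (b + a) (\<lambda>(i, j). if i < b then rowB i j else rowA (i - b) j))"
proof -
  let ?M = "mat (a + b) (a + b) (\<lambda>(j, k). if k < a then gfun c (w ! j) (t ! k) / hfun c (w ! j) (t ! k)
        else gfun c (w ! j) (y ! (k - a)) * pairprod (hfun c) [w ! j] x / pairprod (hfun c) [w ! j] t)"
  have "Zhc c t x s y = pairprod (hfun c) w t * Delta c w * DeltaP c t * DeltaP c y * det ?M"
    unfolding Zhc_def Let_def w_def[symmetric] lens by simp
  also have "det ?M = det (transpose_mat ?M)" by (rule det_transpose[symmetric]) auto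
  also have "\<dots> = (-1) ^ (b * a) *
      det (mat (b + a) (b + a) (\<lambda>(i, j). transpose_mat ?M $$ (if i < b then i + a else i - b, j)))"
    by (rule det_swap_rows) (auto simp: add.commute)
  also have "mat (b + a) (b + a) (\<lambda>(i, j). transpose_mat ?M $$ (if i < b then i + a else i - b, j)) =
      mat (b + a) (b + a) (\<lambda>(i, j). if i < b then rowB i j else rowA (i - b) j)"
    by (rule eq_matI) (auto simp: rowA_def rowB_def hratio_def)
  finally show ?thesis by simp
qed

definition "coefW i \<rho> = (y ! \<rho>) ^ i * (\<Prod>v\<in>set y - {y ! \<rho>}. c / (y ! \<rho> - v))"

lemma det_coefW: "det (mat b b (\<lambda>(i, \<rho>). coefW i \<rho>)) = DeltaP c y * c ^ (\<Sum>m<b. m)"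
  using det_weighted_vandermonde[OF distinct_parts(4) lens(4), of "\<lambda>_. 1" c]
  unfolding coefW_def by simp

text \<open>Lagrange interpolation of z^i (degree below b) at the b + 1 points w!j and y.\<close>
lemma sum_coefW_rowB:
  assumes i: "i < b" and j: "j < a + b"
  shows "(\<Sum>\<rho><b. coefW i \<rho> * rowB \<rho> j) = c ^ b * rowE i j"
proof -
  let ?w = "w ! j"
  have wy: "?w \<notin> set y" by (rule w_notin_y[OF j])
  have lagrange: "?w ^ i / (\<Prod>v\<in>set y. ?w - v) +
      (\<Sum>z\<in>set y. z ^ i / ((z - ?w) * (\<Prod>v\<in>set y - {z}. z - v))) = 0"
    using sum_poly_div_prod_diffs_insert[of "set y" ?w "monom 1 i"] wy i distinct_parts(4) lens(4)
    by (simp add: poly_monom degree_monom_eq distinct_card)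
  have "(\<Sum>\<rho><b. coefW i \<rho> * rowB \<rho> j) =
      (\<Sum>z\<in>set y. z ^ i * (\<Prod>v\<in>set y - {z}. c / (z - v)) * (c / (?w - z) * hratio j))"
    unfolding lens(4)[symmetric] coefW_def rowB_def hratio_def gfun_def
    by (subst sum_nth_distinct[OF distinct_parts(4), symmetric]) (simp add: algebra_simps)
  also have "\<dots> = - (c ^ b * hratio j) * (\<Sum>z\<in>set y. z ^ i / ((z - ?w) * (\<Prod>v\<in>set y - {z}. z - v)))"
    unfolding sum_distrib_left
  proof (rule sum.cong[OF refl])
    fix z assume z: "z \<in> set y"
    have "card (set y - {z}) = b - 1" using z distinct_parts(4) lens(4) by (simp add: distinct_card)
    hence "(\<Prod>v\<in>set y - {z}. c / (z - v)) = c ^ (b - 1) / (\<Prod>v\<in>set y - {z}. z - v)"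
      by (simp add: prod_dividef)
    moreover have "c ^ b = c * c ^ (b - 1)" using i by (cases b) auto
    moreover have "?w - z \<noteq> 0" "z - ?w = - (?w - z)" using z wy by auto
    moreover have "(\<Prod>v\<in>set y - {z}. z - v) \<noteq> 0" using z by (auto simp: prod_zero_iff)
    ultimately show "z ^ i * (\<Prod>v\<in>set y - {z}. c / (z - v)) * (c / (?w - z) * hratio j) =
        - (c ^ b * hratio j) * (z ^ i / ((z - ?w) * (\<Prod>v\<in>set y - {z}. z - v)))"
      by (simp add: field_simps)
  qed
  also have "\<dots> = c ^ b * hratio j * (?w ^ i / (\<Prod>v\<in>set y. ?w - v))"
    using lagrange by (simp add: add_eq_0_iff2)
  also have "\<dots> = c ^ b * rowE i j"
    unfolding rowE_def by simp
  finally show ?thesis .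
qed

definition "theta = det (mat (b + a) (b + a) (\<lambda>(i, j). if i < b then rowE i j else rowA (i - b) j))"

lemma det_rowB_rowA:
  "DeltaP c y * c ^ (\<Sum>m<b. m) * det (mat (b + a) (b + a) (\<lambda>(i, j). if i < b then rowB i j else rowA (i - b) j)) =
    c ^ (b * b) * theta"
proof -
  \<comment> \<open>Cauchy-Binet with as many summation indices as rows is the product formula\<close>
  have full: "{I. I \<subseteq> {..<b} \<and> card I = b} = {{..<b}}"
    using card_subset_eq[of "{..<b}"] by auto
  have nth: "sorted_list_of_set {..<b} ! m = m" if "m < b" for m
    using that by (simp add: lessThan_atLeast0)
  have "mat b b (\<lambda>(i, m). coefW i (sorted_list_of_set {..<b} ! m)) = mat b b (\<lambda>(i, \<rho>). coefW i \<rho>)"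
    by (rule eq_matI) (auto simp: nth)
  moreover have "mat (b + a) (b + a)
        (\<lambda>(i, j). if i < b then rowB (sorted_list_of_set {..<b} ! i) j else rowA (i - b) j) =
      mat (b + a) (b + a) (\<lambda>(i, j). if i < b then rowB i j else rowA (i - b) j)"
    by (rule eq_matI) (auto simp: nth)
  ultimately have "det (mat (b + a) (b + a)
        (\<lambda>(i, j). if i < b then (\<Sum>\<rho><b. coefW i \<rho> * rowB \<rho> j) else rowA (i - b) j)) =
      det (mat b b (\<lambda>(i, \<rho>). coefW i \<rho>)) *
      det (mat (b + a) (b + a) (\<lambda>(i, j). if i < b then rowB i j else rowA (i - b) j))"
    using det_cauchy_binet_top_rows[of b "b + a" coefW rowB b "\<lambda>i j. rowA i j"]
    unfolding full by simp
  also have "mat (b + a) (b + a)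
        (\<lambda>(i, j). if i < b then (\<Sum>\<rho><b. coefW i \<rho> * rowB \<rho> j) else rowA (i - b) j) =
      mat (b + a) (b + a) (\<lambda>(i, j). (if i < b then c ^ b else 1) *
        (if i < b then rowE i j else rowA (i - b) j) * 1)"
    by (rule eq_matI) (auto simp: sum_coefW_rowB)
  also have "det \<dots> = c ^ (b * b) * theta"
    unfolding det_mat_scale_rows_cols theta_def by (simp add: prod_lessThan_add power_mult)
  finally show ?thesis unfolding det_coefW by (simp add: ac_simps)
qed

lemma Zhc_eq_theta:
  "Zhc c t x s y * c ^ (\<Sum>m<b. m) =
    (-1) ^ (b * a) * pairprod (hfun c) w t * Delta c w * DeltaP c t * c ^ (b * b) * theta"
proof -
  have "Zhc c t x s y * c ^ (\<Sum>m<b. m) = (-1) ^ (b * a) * pairprod (hfun c) w t * Delta c w * DeltaP c t *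
    (DeltaP c y * c ^ (\<Sum>m<b. m) *
      det (mat (b + a) (b + a) (\<lambda>(i, j). if i < b then rowB i j else rowA (i - b) j)))"
    unfolding Zhc_eq_det_rows by (simp only: ac_simps)
  thus ?thesis unfolding det_rowB_rowA by (simp only: ac_simps)
qed

definition "nu = map (\<lambda>z. z - c) s @ y"
definition "tc = map (\<lambda>z. z - c) t"
definition "nodes = set nu \<union> set tc"

lemma length_nu: "length nu = 2 * b" and length_tc: "length tc = a"
  using lens by (auto simp: nu_def tc_def)

lemma shift_notin_pts: "u \<in> set pts \<Longrightarrow> u - c \<notin> set pts"
  using pts_ne_shift by force

lemma distinct_nu: "distinct nu"
  using distinct_parts(3,4) shift_notin_pts by (auto simp: nu_def distinct_map inj_on_def)

lemma distinct_tc: "distinct tc"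
  using distinct_parts(1) by (simp add: tc_def distinct_map inj_on_def)

lemma nu_tc_disjoint: "set nu \<inter> set tc = {}"
  using distinct_parts shift_notin_pts by (auto simp: nu_def tc_def)

lemma card_nodes: "card nodes = 2 * b + a"
  using distinct_nu distinct_tc nu_tc_disjoint length_nu length_tc
  by (simp add: nodes_def card_Un_disjoint distinct_card)

lemma w_notin_nodes: "k < a + b \<Longrightarrow> w ! k \<notin> nodes"
  using w_in_pts w_notin_y shift_notin_pts by (fastforce simp: nodes_def nu_def tc_def)

lemma w_ne_t: "k < a + b \<Longrightarrow> m < a \<Longrightarrow> w ! k - t ! m \<noteq> 0"
  using w_notin_t lens(1) by force

lemma w_ne_tc: "k < a + b \<Longrightarrow> m < a \<Longrightarrow> w ! k - t ! m + c \<noteq> 0"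
  using pts_ne_shift[of "t ! m" "w ! k"] w_in_pts lens(1) by (force simp: algebra_simps)

definition "q i k z = z ^ i * (\<Prod>l\<in>{..<a + b} - {k}. z - w ! l + c)"

lemma q_poly: "poly (monom 1 i * (\<Prod>l\<in>{..<a + b} - {k}. [:c - w ! l, 1:])) = q i k"
  by (auto simp: q_def poly_monom poly_prod algebra_simps)

lemma degree_q_poly:
  assumes "k < a + b"
  shows "degree (monom 1 i * (\<Prod>l\<in>{..<a + b} - {k}. [:c - w ! l, 1:])) \<le> i + (a + b - 1)"
proof -
  have "degree (\<Prod>l\<in>{..<a + b} - {k}. [:c - w ! l, 1:]) \<le> (\<Sum>l\<in>{..<a + b} - {k}. degree [:c - w ! l, 1:])"
    using degree_prod_sum_le[of "{..<a + b} - {k}" "\<lambda>l. [:c - w ! l, 1:]"] by (simp add: o_def)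
  also have "\<dots> = a + b - 1" using assms by simp
  finally show ?thesis
    using degree_mult_le[of "monom 1 i"] degree_monom_le[of 1 i] by (meson add_le_mono order_trans)
qed

definition "coefAlpha i \<rho> = (nu ! \<rho>) ^ i *
  ((\<Prod>v\<in>set nu - {nu ! \<rho>}. c / (nu ! \<rho> - v)) * (\<Prod>v\<in>set tc. c / (nu ! \<rho> - v)))"
definition "rowC \<rho> k = gfun c (nu ! \<rho>) (w ! k) * (\<Prod>l\<in>{..<a + b} - {k}. hfun c (nu ! \<rho>) (w ! l))"
definition "coefGamma i m = - (c ^ (b - 1)) * (tc ! m) ^ i * (\<Prod>l<a + b. t ! m - w ! l) /
   (\<Prod>v\<in>nodes - {tc ! m}. tc ! m - v)"

lemma coefAlpha_rowC:
  assumes "0 < b" "\<rho> < 2 * b" "k < a + b"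
  shows "coefAlpha i \<rho> * rowC \<rho> k =
    c ^ (b + 1) * (q i k (nu ! \<rho>) / ((nu ! \<rho> - w ! k) * (\<Prod>v\<in>nodes - {nu ! \<rho>}. nu ! \<rho> - v)))"
proof -
  let ?z = "nu ! \<rho>"
  let ?K = "{..<a + b} - {k}"
  obtain n where n: "b = Suc n" using assms(1) gr0_implies_Suc by blast
  have z: "?z \<in> set nu" using assms(2) length_nu by simp
  hence z': "?z \<notin> set tc" using nu_tc_disjoint by blast
  have "card (set nu - {?z}) = Suc (n + n)" using z distinct_nu length_nu n by (simp add: distinct_card)
  hence e1: "(\<Prod>v\<in>set nu - {?z}. c / (?z - v)) = c ^ Suc (n + n) / (\<Prod>v\<in>set nu - {?z}. ?z - v)"
    by (simp add: prod_dividef)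
  have e2: "(\<Prod>v\<in>set tc. c / (?z - v)) = c ^ a / (\<Prod>v\<in>set tc. ?z - v)"
    using distinct_tc length_tc by (simp add: prod_dividef distinct_card)
  have e3: "(\<Prod>l\<in>?K. hfun c ?z (w ! l)) = (\<Prod>l\<in>?K. ?z - w ! l + c) / c ^ (a + n)"
    using assms(3) n by (simp add: hfun_def prod_dividef)
  have e4: "c ^ (b + 1) = c * c * c ^ n" using n by simp
  have split: "(\<Prod>v\<in>nodes - {?z}. ?z - v) = (\<Prod>v\<in>set nu - {?z}. ?z - v) * (\<Prod>v\<in>set tc. ?z - v)"
  proof -
    have "nodes - {?z} = (set nu - {?z}) \<union> set tc" using z' by (auto simp: nodes_def)
    thus ?thesis using nu_tc_disjoint by (subst prod.union_disjoint[symmetric]) auto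
  qed
  have "(\<Prod>v\<in>set nu - {?z}. ?z - v) \<noteq> 0" "(\<Prod>v\<in>set tc. ?z - v) \<noteq> 0" "?z - w ! k \<noteq> 0"
    using z z' w_notin_nodes[OF assms(3)] by (auto simp: prod_zero_iff nodes_def)
  with c show ?thesis
    unfolding coefAlpha_def rowC_def q_def e1 e2 e3 e4 split gfun_def
    by (simp add: field_simps power_add)
qed

lemma rowE_eq:
  assumes k: "k < a + b"
  shows "c ^ b * rowE i k = c ^ (b + 1) * (q i k (w ! k) / (\<Prod>v\<in>nodes. w ! k - v))"
proof -
  let ?W = "w ! k"
  define X where "X = (\<Prod>l<a. ?W - x ! l + c)"
  define S where "S = (\<Prod>l<b. ?W - s ! l + c)"
  define T where "T = (\<Prod>m<a. ?W - t ! m + c)"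
  define Y where "Y = (\<Prod>v\<in>set y. ?W - v)"
  have "c * (\<Prod>l\<in>{..<a + b} - {k}. ?W - w ! l + c) = (\<Prod>l<a + b. ?W - w ! l + c)"
    using k by (subst prod.remove[of _ k]) auto
  also have "\<dots> = X * S"
    unfolding X_def S_def prod_lessThan_add w_def using lens by (simp add: nth_append)
  finally have q: "q i k ?W = ?W ^ i * (X * S) / c"
    using c by (simp add: q_def field_simps)
  have "(\<Prod>v\<in>set nu. ?W - v) = S * Y"
  proof -
    have "(\<Prod>v\<in>set nu. ?W - v) = (\<Prod>\<rho><length nu. ?W - nu ! \<rho>)"
      by (rule prod_nth_distinct[OF distinct_nu, symmetric])
    also have "\<dots> = (\<Prod>\<rho><b. ?W - (s ! \<rho> - c)) * (\<Prod>\<rho><b. ?W - y ! \<rho>)"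
      by (simp only: length_nu mult_2 prod_lessThan_add) (simp add: nu_def nth_append lens)
    also have "(\<Prod>\<rho><b. ?W - y ! \<rho>) = Y"
      unfolding Y_def lens(4)[symmetric] by (rule prod_nth_distinct[OF distinct_parts(4)])
    finally show ?thesis unfolding S_def by (simp add: algebra_simps)
  qed
  moreover have "(\<Prod>v\<in>set tc. ?W - v) = T"
    unfolding T_def prod_nth_distinct[OF distinct_tc, symmetric] length_tc
    using lens(1) by (simp add: tc_def algebra_simps)
  ultimately have nodes: "(\<Prod>v\<in>nodes. ?W - v) = S * Y * T"
    using nu_tc_disjoint by (simp add: nodes_def prod.union_disjoint)
  have "pairprod (hfun c) [?W] x = X / c ^ a" "pairprod (hfun c) [?W] t = T / c ^ a"
    unfolding pairprod_def X_def T_def hfun_def using lens by (simp_all add: prod_dividef)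
  hence "hratio k = X / T" using c by (simp add: hratio_def)
  moreover have "S \<noteq> 0"
  proof -
    have "?W - s ! l + c \<noteq> 0" if "l < b" for l
    proof
      assume "?W - s ! l + c = 0"
      hence "s ! l = ?W + c" by (simp add: algebra_simps)
      moreover have "s ! l \<in> set pts" using that lens(3) by simp
      ultimately show False using pts_ne_shift w_in_pts[OF k] by blast
    qed
    thus ?thesis by (simp add: S_def prod_zero_iff)
  qed
  moreover have "Y \<noteq> 0" using w_notin_y[OF k] by (auto simp: Y_def prod_zero_iff)
  moreover have "T \<noteq> 0" using w_ne_tc[OF k] by (auto simp: T_def prod_zero_iff)
  ultimately show ?thesis
    using c unfolding rowE_def q nodes Y_def[symmetric] by (simp add: field_simps)
qed

lemma coefGamma_rowA:
  assumes "0 < b" and m: "m < a" and k: "k < a + b"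
  shows "coefGamma i m * rowA m k =
    - (c ^ (b + 1)) * (q i k (tc ! m) / ((tc ! m - w ! k) * (\<Prod>v\<in>nodes - {tc ! m}. tc ! m - v)))"
proof -
  let ?z = "tc ! m" and ?W = "w ! k"
  let ?P = "\<Prod>v\<in>nodes - {?z}. ?z - v"
  define R where "R = (\<Prod>l\<in>{..<a + b} - {k}. t ! m - w ! l)"
  have tm: "t ! m = ?z + c" using m lens by (simp add: tc_def)
  have field_identity: "- C * Z * (- d * R) / P * (c / d / (e / c)) = - (C * c * c) * (Z * R / (- e * P))"
    if "d \<noteq> 0" "e \<noteq> 0" "P \<noteq> 0" for C Z d e P :: complex
    using that c by (simp add: field_simps)
  have "(\<Prod>l<a + b. t ! m - w ! l) = - (?W - t ! m) * R"
    unfolding R_def using k by (subst prod.remove[of _ k]) auto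
  hence "coefGamma i m * rowA m k =
      - (c ^ (b - 1)) * ?z ^ i * (- (?W - t ! m) * R) / ?P * (c / (?W - t ! m) / ((?W - t ! m + c) / c))"
    by (simp add: coefGamma_def rowA_def gfun_def hfun_def)
  also have "\<dots> = - (c ^ (b - 1) * c * c) * (?z ^ i * R / (- (?W - t ! m + c) * ?P))"
    by (rule field_identity) (use w_ne_t[OF k m] w_ne_tc[OF k m] in \<open>auto simp: prod_zero_iff nodes_def\<close>)
  also have "c ^ (b - 1) * c * c = c ^ (b + 1)" using assms(1) by (cases b) auto
  also have "?z ^ i * R = q i k ?z"
    unfolding q_def R_def tm by (simp add: algebra_simps)
  also have "- (?W - t ! m + c) = ?z - ?W" unfolding tm by simp
  finally show ?thesis .
qed

text \<open>Lagrange interpolation of q i k (degree below 2b + a) at w!k and the 2b + a nodes.\<close>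
lemma sum_coefAlpha_rowC:
  assumes i: "i < b" and k: "k < a + b"
  shows "(\<Sum>\<rho><2 * b. coefAlpha i \<rho> * rowC \<rho> k) = - (c ^ b) * rowE i k + (\<Sum>m<a. coefGamma i m * rowA m k)"
proof -
  let ?W = "w ! k"
  define F where "F z = q i k z / ((z - ?W) * (\<Prod>v\<in>nodes - {z}. z - v))" for z
  let ?X = "q i k ?W / (\<Prod>v\<in>nodes. ?W - v)"
  define Q where "Q = monom 1 i * (\<Prod>l\<in>{..<a + b} - {k}. [:c - w ! l, 1:])"
  have "degree Q + 1 \<le> card nodes"
    using degree_q_poly[OF k, of i] i k unfolding card_nodes Q_def by simp
  from sum_poly_div_prod_diffs_insert[OF _ w_notin_nodes[OF k] this]
  have "?X + (\<Sum>z\<in>nodes. F z) = 0"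
    unfolding F_def Q_def q_poly by (simp add: nodes_def)
  moreover have "(\<Sum>z\<in>nodes. F z) = (\<Sum>z\<in>set nu. F z) + (\<Sum>z\<in>set tc. F z)"
    unfolding nodes_def using nu_tc_disjoint by (simp add: sum.union_disjoint)
  ultimately have nu_part: "(\<Sum>z\<in>set nu. F z) = - ?X - (\<Sum>z\<in>set tc. F z)"
    by (simp add: eq_diff_eq eq_neg_iff_add_eq_0 ac_simps)
  have "(\<Sum>\<rho><2 * b. coefAlpha i \<rho> * rowC \<rho> k) = c ^ (b + 1) * (\<Sum>z\<in>set nu. F z)"
    using coefAlpha_rowC[of \<rho> k i for \<rho>] i k
    unfolding sum_nth_distinct[OF distinct_nu, symmetric] length_nu sum_distrib_left F_def by simp
  also have "\<dots> = - (c ^ (b + 1) * ?X) + - (c ^ (b + 1)) * (\<Sum>z\<in>set tc. F z)"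
    unfolding nu_part by (simp add: algebra_simps)
  also have "- (c ^ (b + 1)) * (\<Sum>z\<in>set tc. F z) = (\<Sum>m<a. coefGamma i m * rowA m k)"
    using coefGamma_rowA[of m k i for m] i k
    unfolding sum_nth_distinct[OF distinct_tc, symmetric] length_tc sum_distrib_left F_def by simp
  finally have "(\<Sum>\<rho><2 * b. coefAlpha i \<rho> * rowC \<rho> k) =
      - (c ^ (b + 1) * ?X) + (\<Sum>m<a. coefGamma i m * rowA m k)" .
  thus ?thesis unfolding rowE_eq[OF k, symmetric] by simp
qed

lemma sum_det_coefAlpha_rowC:
  "(\<Sum>I | I \<subseteq> {..<2 * b} \<and> card I = b.
      det (mat b b (\<lambda>(k, m). coefAlpha k (sorted_list_of_set I ! m))) *
      det (mat (b + a) (b + a) (\<lambda>(i, j). if i < b then rowC (sorted_list_of_set I ! i) j else rowA (i - b) j))) =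
    (- (c ^ b)) ^ b * theta"
proof -
  have "(\<Sum>I | I \<subseteq> {..<2 * b} \<and> card I = b.
      det (mat b b (\<lambda>(k, m). coefAlpha k (sorted_list_of_set I ! m))) *
      det (mat (b + a) (b + a) (\<lambda>(i, j). if i < b then rowC (sorted_list_of_set I ! i) j else rowA (i - b) j))) =
    det (mat (b + a) (b + a) (\<lambda>(i, j).
      if i < b then (\<Sum>\<rho><2 * b. coefAlpha i \<rho> * rowC \<rho> j) else rowA (i - b) j))"
    by (rule det_cauchy_binet_top_rows[symmetric]) simp
  also have "\<dots> = det (mat (b + a) (b + a) (\<lambda>(i, j).
      if i < b then - (c ^ b) * rowE i j + (\<Sum>m<a. coefGamma i m * rowA m j) else rowA (i - b) j))"
    by (intro arg_cong[where f = det] eq_matI) (auto simp: sum_coefAlpha_rowC)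
  also have "\<dots> = det (mat (b + a) (b + a) (\<lambda>(i, j).
      (if i < b then - (c ^ b) else 1) * (if i < b then rowE i j else rowA (i - b) j) * 1))"
    by (subst det_add_lower_rows_to_top) (auto intro!: arg_cong[where f = det] eq_matI)
  also have "\<dots> = (- (c ^ b)) ^ b * theta"
    unfolding det_mat_scale_rows_cols theta_def by (simp add: prod_lessThan_add)
  finally show ?thesis .
qed

lemma gfun_tc_w:
  assumes m: "m < a" and k: "k < a + b"
  shows "gfun c (tc ! m) (w ! k) = hfun c (tc ! m) (w ! k) * rowA m k"
proof -
  let ?d = "w ! k - t ! m" and ?e = "w ! k - t ! m + c"
  have "tc ! m = t ! m - c" using m lens by (simp add: tc_def)
  hence "gfun c (tc ! m) (w ! k) = c / (- ?e)" "hfun c (tc ! m) (w ! k) = (- ?d) / c"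
    by (simp_all add: gfun_def hfun_def)
  moreover have "rowA m k = c / ?d / (?e / c)" by (simp add: rowA_def gfun_def hfun_def)
  moreover have "c / (- e) = (- d) / c * (c / d / (e / c))" if "d \<noteq> 0" "e \<noteq> 0" for d e :: complex
    using that c by (simp add: field_simps)
  ultimately show ?thesis using w_ne_t[OF k m] w_ne_tc[OF k m] by metis
qed

context
  fixes I :: "nat set"
  assumes I: "I \<subseteq> {..<2 * b}" "card I = b"
begin

abbreviation "nuI \<equiv> nths nu I"
abbreviation "nuII \<equiv> nths nu ({..<2 * b} - I)"

lemma length_nuI: "length nuI = b"
proof -
  have "{i. i < length nu \<and> i \<in> I} = I" using I length_nu by auto
  thus ?thesis using I by (simp add: length_nths)
qed

lemma nth_nuI: "m < b \<Longrightarrow> nuI ! m = nu ! (sorted_list_of_set I ! m)"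
  using nths_nth_sorted_list_of_set[of I nu m] I length_nu by simp

lemma nuI_nuII_partition: "set nuI \<inter> set nuII = {}" "set nuI \<union> set nuII = set nu"
proof -
  have setI: "set nuI = {nu ! i | i. i < 2 * b \<and> i \<in> I}"
    and setII: "set nuII = {nu ! i | i. i < 2 * b \<and> i \<notin> I}"
    by (simp_all add: set_nths length_nu)
  show "set nuI \<inter> set nuII = {}"
    unfolding setI setII using distinct_nu length_nu by (auto simp: nth_eq_iff_index_eq)
  show "set nuI \<union> set nuII = set nu"
    unfolding setI setII using length_nu by (auto simp: in_set_conv_nth) (metis in_set_conv_nth)
qed

lemma det_coefAlpha_subset:
  "det (mat b b (\<lambda>(k, m). coefAlpha k (sorted_list_of_set I ! m))) =
    pairprod (gfun c) nuI nuII * pairprod (gfun c) nuI tc * DeltaP c nuI * c ^ (\<Sum>m<b. m)"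
proof -
  define R where "R m = (\<Prod>v\<in>set nuII. c / (nuI ! m - v)) * (\<Prod>v\<in>set tc. c / (nuI ! m - v))" for m
  have "mat b b (\<lambda>(k, m). coefAlpha k (sorted_list_of_set I ! m)) =
    mat b b (\<lambda>(i, m). nuI ! m ^ i * (R m * (\<Prod>v\<in>set nuI - {nuI ! m}. c / (nuI ! m - v))))"
  proof (rule eq_matI)
    fix i m assume "i < dim_row (mat b b (\<lambda>(i, m). nuI ! m ^ i * (R m * (\<Prod>v\<in>set nuI - {nuI ! m}. c / (nuI ! m - v)))))"
      "m < dim_col (mat b b (\<lambda>(i, m). nuI ! m ^ i * (R m * (\<Prod>v\<in>set nuI - {nuI ! m}. c / (nuI ! m - v)))))"
    hence i: "i < b" and m: "m < b" by auto
    let ?z = "nuI ! m"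
    have "?z \<in> set nuI" using m length_nuI by simp
    hence "set nu - {?z} = (set nuI - {?z}) \<union> set nuII" using nuI_nuII_partition by blast
    hence "(\<Prod>v\<in>set nu - {?z}. c / (?z - v)) =
        (\<Prod>v\<in>set nuI - {?z}. c / (?z - v)) * (\<Prod>v\<in>set nuII. c / (?z - v))"
      using nuI_nuII_partition(1) by (simp add: prod.union_disjoint Diff_Int_distrib2)
    thus "mat b b (\<lambda>(k, m). coefAlpha k (sorted_list_of_set I ! m)) $$ (i, m) =
      mat b b (\<lambda>(i, m). nuI ! m ^ i * (R m * (\<Prod>v\<in>set nuI - {nuI ! m}. c / (nuI ! m - v)))) $$ (i, m)"
      using i m nth_nuI[OF m] by (simp add: coefAlpha_def R_def ac_simps)
  qed auto
  also have "det \<dots> = (\<Prod>m<b. R m) * DeltaP c nuI * c ^ (\<Sum>m<b. m)"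
    using distinct_nu by (intro det_weighted_vandermonde length_nuI) auto
  also have "(\<Prod>m<b. R m) = pairprod (gfun c) nuI nuII * pairprod (gfun c) nuI tc"
  proof -
    have "distinct nuII" using distinct_nu by simp
    thus ?thesis
      using prod_nth_distinct[of nuII "\<lambda>v. c / (nuI ! _ - v)"] prod_nth_distinct[OF distinct_tc, of "\<lambda>v. c / (nuI ! _ - v)"]
      by (simp add: R_def pairprod_def prod.distrib gfun_def length_nuI)
  qed
  finally show ?thesis by simp
qed


lemma IKdet_nuI_tc:
  "IKdet c (nuI @ tc) w = DeltaP c (nuI @ tc) * Delta c w * pairprod (hfun c) tc w *
     det (mat (b + a) (b + a) (\<lambda>(i, j). if i < b then rowC (sorted_list_of_set I ! i) j else rowA (i - b) j))"
proof -
  define H where "H m = (\<Prod>l<a + b. hfun c (tc ! m) (w ! l))" for m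
  have "mat (b + a) (b + a) (\<lambda>(j, k). gfun c ((nuI @ tc) ! j) (w ! k) *
        (\<Prod>l\<in>{..<b + a} - {k}. hfun c ((nuI @ tc) ! j) (w ! l))) =
      mat (b + a) (b + a) (\<lambda>(i, j). (if i < b then 1 else H (i - b)) *
        (if i < b then rowC (sorted_list_of_set I ! i) j else rowA (i - b) j) * 1)"
  proof (rule eq_matI)
    fix i j assume "i < dim_row (mat (b + a) (b + a) (\<lambda>(i, j). (if i < b then 1 else H (i - b)) *
        (if i < b then rowC (sorted_list_of_set I ! i) j else rowA (i - b) j) * 1))"
      "j < dim_col (mat (b + a) (b + a) (\<lambda>(i, j). (if i < b then 1 else H (i - b)) *
        (if i < b then rowC (sorted_list_of_set I ! i) j else rowA (i - b) j) * 1))"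
    hence i: "i < b + a" and j: "j < a + b" by auto
    show "mat (b + a) (b + a) (\<lambda>(j, k). gfun c ((nuI @ tc) ! j) (w ! k) *
        (\<Prod>l\<in>{..<b + a} - {k}. hfun c ((nuI @ tc) ! j) (w ! l))) $$ (i, j) =
      mat (b + a) (b + a) (\<lambda>(i, j). (if i < b then 1 else H (i - b)) *
        (if i < b then rowC (sorted_list_of_set I ! i) j else rowA (i - b) j) * 1) $$ (i, j)"
    proof (cases "i < b")
      case True
      thus ?thesis using i j length_nuI nth_nuI[OF True] by (simp add: nth_append rowC_def add.commute)
    next
      case False
      hence m: "i - b < a" using i by simp
      have "H (i - b) = hfun c (tc ! (i - b)) (w ! j) * (\<Prod>l\<in>{..<a + b} - {j}. hfun c (tc ! (i - b)) (w ! l))"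
        unfolding H_def using j by (subst prod.remove[of _ j]) auto
      hence "gfun c (tc ! (i - b)) (w ! j) * (\<Prod>l\<in>{..<a + b} - {j}. hfun c (tc ! (i - b)) (w ! l)) =
          H (i - b) * rowA (i - b) j"
        using gfun_tc_w[OF m j] by simp
      thus ?thesis using i j length_nuI False by (simp add: nth_append add.commute)
    qed
  qed auto
  hence "IKdet c (nuI @ tc) w = DeltaP c (nuI @ tc) * Delta c w *
      ((\<Prod>i<b + a. if i < b then 1 else H (i - b)) * (\<Prod>i<b + a. 1) *
       det (mat (b + a) (b + a) (\<lambda>(i, j). if i < b then rowC (sorted_list_of_set I ! i) j else rowA (i - b) j)))"
    unfolding IKdet_def length_append length_nuI length_tc by (simp only: det_mat_scale_rows_cols)
  moreover have "(\<Prod>i<b + a. if i < b then 1 else H (i - b)) = pairprod (hfun c) tc w"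
    by (simp add: prod_lessThan_add H_def pairprod_def length_tc length_w)
  ultimately show ?thesis by simp
qed

lemma IK_term_eq:
  "pairprod (gfun c) nuI nuII * IKdet c (nuI @ tc) w * c ^ (\<Sum>m<b. m) =
    DeltaP c t * Delta c w * pairprod (hfun c) tc w *
    (det (mat b b (\<lambda>(k, m). coefAlpha k (sorted_list_of_set I ! m))) *
     det (mat (b + a) (b + a) (\<lambda>(i, j). if i < b then rowC (sorted_list_of_set I ! i) j else rowA (i - b) j)))"
  unfolding IKdet_nuI_tc det_coefAlpha_subset DeltaP_append
  by (simp add: tc_def DeltaP_map_shift ac_simps)

end

lemma sum_IK_terms:
  "(\<Sum>I | I \<subseteq> {..<2 * b} \<and> card I = b.
      pairprod (gfun c) (nths nu I) (nths nu ({..<2 * b} - I)) * IKdet c (nths nu I @ tc) w) * c ^ (\<Sum>m<b. m) =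
    DeltaP c t * Delta c w * pairprod (hfun c) tc w * ((- (c ^ b)) ^ b * theta)"
  unfolding sum_distrib_right sum_det_coefAlpha_rowC[symmetric] sum_distrib_left
  by (intro sum.cong refl) (simp add: IK_term_eq)

lemma ffun_hfun_tc:
  "pairprod (ffun c) w t * pairprod (hfun c) tc w = (-1) ^ (a * (a + b)) * pairprod (hfun c) w t"
proof -
  have "pairprod (hfun c) tc w = (\<Prod>l<a + b. \<Prod>m<a. hfun c (tc ! m) (w ! l))"
    unfolding pairprod_def length_tc length_w by (rule prod.swap)
  hence "pairprod (ffun c) w t * pairprod (hfun c) tc w =
      (\<Prod>l<a + b. \<Prod>m<a. ffun c (w ! l) (t ! m) * hfun c (tc ! m) (w ! l))"
    unfolding pairprod_def length_w lens by (simp add: prod.distrib)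
  also have "\<dots> = (\<Prod>l<a + b. \<Prod>m<a. (- 1) * hfun c (w ! l) (t ! m))"
  proof (intro prod.cong refl)
    fix l m assume "l \<in> {..<a + b}" "m \<in> {..<a}"
    hence "w ! l - t ! m \<noteq> 0" using w_ne_t by simp
    moreover have "tc ! m = t ! m - c" using \<open>m \<in> {..<a}\<close> lens by (simp add: tc_def)
    ultimately show "ffun c (w ! l) (t ! m) * hfun c (tc ! m) (w ! l) = (- 1) * hfun c (w ! l) (t ! m)"
      using c by (simp add: ffun_def hfun_def field_simps)
  qed
  also have "\<dots> = ((-1) ^ a) ^ (a + b) * pairprod (hfun c) w t"
    unfolding pairprod_def length_w lens by (simp only: prod.distrib prod_constant card_lessThan)
  finally show ?thesis by (simp add: power_mult)
qed


lemma Zhc_expansion: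
  "Zhc c t x s y =
    (-1) ^ (a + b) * pairprod (ffun c) x t * pairprod (ffun c) s t *
    (\<Sum>I | I \<subseteq> {..<2 * b} \<and> card I = b.
       (let \<nu> = map (\<lambda>z. z - c) s @ y;
            \<nu>I = nths \<nu> I; \<nu>II = nths \<nu> ({..<2 * b} - I)
        in pairprod (gfun c) \<nu>I \<nu>II * IKdet c (\<nu>I @ map (\<lambda>z. z - c) t) (x @ s)))"
    (is "_ = ?rhs")
proof -
  let ?K = "c ^ (\<Sum>m<b. m)"
  let ?sum = "\<Sum>I | I \<subseteq> {..<2 * b} \<and> card I = b.
        pairprod (gfun c) (nths nu I) (nths nu ({..<2 * b} - I)) * IKdet c (nths nu I @ tc) w"
  have sign: "(-1::complex) ^ (a + b) * (-1) ^ (a * (a + b)) * (-1) ^ b = (-1) ^ (b * a)"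
  proof -
    have "(-1::complex) ^ (a + b) * (-1) ^ (a * (a + b)) * (-1) ^ b = (-1) ^ (a + b + a * (a + b) + b)"
      by (simp only: power_add)
    also have "a + b + a * (a + b) + b = b * a + (a + a * a) + 2 * b" by (simp add: algebra_simps)
    also have "(-1::complex) ^ (b * a + (a + a * a) + 2 * b) = (-1) ^ (b * a)"
    proof -
      have "even (a + a * a)" by simp
      hence "(-1::complex) ^ (a + a * a) = 1" by simp
      thus ?thesis by (simp only: power_add power_mult) simp
    qed
    finally show ?thesis .
  qed
  have "?rhs * ?K = (-1) ^ (a + b) * pairprod (ffun c) w t * (?sum * ?K)"
    unfolding w_def pairprod_append_left by (simp only: Let_def nu_def tc_def mult.assoc)
  also have "\<dots> = (-1) ^ (a + b) * (pairprod (ffun c) w t * pairprod (hfun c) tc w) * (-1) ^ b *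
      DeltaP c t * Delta c w * c ^ (b * b) * theta"
    unfolding sum_IK_terms power_minus[of "c ^ b"] power_mult[symmetric] by (simp only: ac_simps)
  also have "\<dots> = Zhc c t x s y * ?K"
    unfolding ffun_hfun_tc Zhc_eq_theta sign[symmetric] by (simp only: ac_simps)
  finally show ?thesis using c by simp
qed

end

theorem mainTheorem8:
  fixes c :: complex and t x s y :: "complex list" and a b :: nat
  assumes c: "c \<noteq> 0"
    and lens: "length t = a" "length x = a" "length s = b" "length y = b"
    and generic: "\<And>i j. i < length (t @ x @ s @ y) \<Longrightarrow> j < length (t @ x @ s @ y) \<Longrightarrow> i \<noteq> j \<Longrightarrow>
        (t @ x @ s @ y) ! i - (t @ x @ s @ y) ! j \<notin> {0, c, - c}"
  shows "Zhc c t x s y =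
    (-1) ^ (a + b) * pairprod (ffun c) x t * pairprod (ffun c) s t *
    (\<Sum>I | I \<subseteq> {..<2 * b} \<and> card I = b.
       (let \<nu> = map (\<lambda>z. z - c) s @ y;
            \<nu>I = nths \<nu> I; \<nu>II = nths \<nu> ({..<2 * b} - I)
        in pairprod (gfun c) \<nu>I \<nu>II * IKdet c (\<nu>I @ map (\<lambda>z. z - c) t) (x @ s)))"
proof -
  interpret highest_coeff_data c t x s y a b
    using assms by unfold_locales auto
  show ?thesis by (rule Zhc_expansion)
qed

end
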